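(* Let $C$ be a $d$-dimensional rational convex polyhedral cone with $C\cap(-C)=\{0\}$, $d\ge2$, and $P$ its face poset. Then $$Q(P,t):=(1-t)^{-1}\big(G(P,t)-t^{d-1}G(P,t^{-1})\big)$$ is a polynomial in $t$ satisfying (i) $Q(P,t)=t^{d-2}Q(P,t^{-1})$ and (ii) $\tau_{\le(d-2)/2}Q(P,t)=\tau_{\le(d-2)/2}H(P,t)$; that is, $H_{\rm Lef}(P,t)=(1-t)^{-1}\big(G(P,t)-t^{d-1}G(P,t^{-1})\big)$.
   Context: The face poset $P$ of $C$, ordered by inclusion, is an Eulerian poset of rank $d$: a finite poset with least element $\hat0=\{0\}$ and greatest element $\hat1=C$, all maximal chains of length $d$, rank function $\rho(x)=\dim$ of the face, Möbius function $\mu(x,y)=(-1)^{\rho(y)-\rho(x)}$; intervals $[x,y]$ are Eulerian of rank $\rho(y)-\rho(x)$. For Eulerian $Q'$ of rank $e$: $G=H=1$ if $e=0$; for $e>0$, $H(Q',t)=\sum_{\hat0<x\le\hat1}(t-1)^{\rho(x)-1}G([x,\hat1],t)$ and $G(Q',t)=\tau_{<e/2}((1-t)H(Q',t))$, where $\tau_{<r}(\sum a_it^i)=\sum_{i<r}a_it^i$ and $\tau_{\le r}$ keeps the terms of degree $\le r$. $H_{\rm Lef}(P,t)$ denotes the polynomial of degree $d-2$ characterized by (i) $H_{\rm Lef}(P,t)=t^{d-2}H_{\rm Lef}(P,t^{-1})$ and (ii) $\tau_{\le(d-2)/2}H_{\rm Lef}(P,t)=\tau_{\le(d-2)/2}H(P,t)$.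 *)

theory Defs
  imports "HOL-Analysis.Analysis" "HOL-Computational_Algebra.Polynomial"
begin

definition tau_lt :: "real \<Rightarrow> real poly \<Rightarrow> real poly" where
  "tau_lt r p = (\<Sum>i\<in>{i. i \<le> degree p \<and> real i < r}. monom (coeff p i) i)"

definition tau_le :: "real \<Rightarrow> real poly \<Rightarrow> real poly" where
  "tau_le r p = (\<Sum>i\<in>{i. i \<le> degree p \<and> real i \<le> r}. monom (coeff p i) i)"

text \<open>Toric H-polynomial of an interval [x,y] of a graded poset (carrier P, order le,
  rank rk), computed with a fuel parameter n; the G-polynomial of a subinterval
  [z,y] of positive rank e is tau_lt (e/2) ((1-t) H([z,y])), and 1 for rank 0.
  With fuel equal to the rank of the interval (see H_int) this is exactly the
  recursive definition of the paper.\<close>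
fun hfuel :: "nat \<Rightarrow> 'a set \<Rightarrow> ('a \<Rightarrow> 'a \<Rightarrow> bool) \<Rightarrow> ('a \<Rightarrow> nat) \<Rightarrow> 'a \<Rightarrow> 'a \<Rightarrow> real poly" where
  "hfuel 0 P le rk x y = 1"
| "hfuel (Suc n) P le rk x y =
     (\<Sum>z\<in>{z\<in>P. le x z \<and> z \<noteq> x \<and> le z y}.
        [:-1, 1:] ^ (rk z - rk x - 1) *
        (if rk y - rk z = 0 then 1
         else tau_lt (real (rk y - rk z) / 2) ([:1, -1:] * hfuel n P le rk z y)))"

definition H_int :: "'a set \<Rightarrow> ('a \<Rightarrow> 'a \<Rightarrow> bool) \<Rightarrow> ('a \<Rightarrow> nat) \<Rightarrow> 'a \<Rightarrow> 'a \<Rightarrow> real poly" where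
  "H_int P le rk x y = hfuel (rk y - rk x) P le rk x y"

definition G_int :: "'a set \<Rightarrow> ('a \<Rightarrow> 'a \<Rightarrow> bool) \<Rightarrow> ('a \<Rightarrow> nat) \<Rightarrow> 'a \<Rightarrow> 'a \<Rightarrow> real poly" where
  "G_int P le rk x y =
     (if rk y - rk x = 0 then 1
      else tau_lt (real (rk y - rk x) / 2) ([:1, -1:] * H_int P le rk x y))"

definition rational_poly_cone :: "(real^'n) set \<Rightarrow> bool" where
  "rational_poly_cone C \<longleftrightarrow>
     (\<exists>S. finite S \<and> (\<forall>v\<in>S. \<forall>i. v $ i \<in> \<rat>) \<and> C = convex_cone hull S)"

definition face_poset :: "(real^'n) set \<Rightarrow> (real^'n) set set" where
  "face_poset C = {F. F face_of C \<and> F \<noteq> {}}"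

definition face_rank :: "(real^'n) set \<Rightarrow> nat" where
  "face_rank F = nat (aff_dim F)"

definition G_face :: "(real^'n) set \<Rightarrow> real poly" where
  "G_face C = G_int (face_poset C) (\<subseteq>) face_rank {0} C"

definition H_face :: "(real^'n) set \<Rightarrow> real poly" where
  "H_face C = H_int (face_poset C) (\<subseteq>) face_rank {0} C"

end

theory Submission
  imports Defs
begin

text \<open>Write g_i for the coefficients of (1 - t) H, so that G = sum_{i < d/2} g_i t^i.
  Then G(t) - t^(d-1) G(1/t) = sum_i g_i (t^i - t^(d-1-i)), and dividing by 1 - t gives
  Q = sum_i g_i (t^i + ... + t^(d-2-i)), a sum of blocks that are palindromic of degree d - 2.
  For 2j \<le> d - 2 every block starting at some i \<le> j contains t^j, so the j-th coefficient
  of Q is g_0 + ... + g_j, which telescopes to the j-th coefficient of H. Nothing about the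
  cone is used beyond G = tau_{<d/2}((1 - t) H).\<close>

lemma coeff_sum_monom_coeff_filter:
  "coeff (\<Sum>i\<in>{i. i \<le> degree p \<and> P i}. monom (coeff p i) i) n = (if P n then coeff p n else 0)"
proof -
  have "finite {i. i \<le> degree p \<and> P i}" by simp
  then have "coeff (\<Sum>i\<in>{i. i \<le> degree p \<and> P i}. monom (coeff p i) i) n
      = (if n \<in> {i. i \<le> degree p \<and> P i} then coeff p n else 0)"
    by (simp add: coeff_sum coeff_monom sum.delta)
  then show ?thesis by (auto simp: coeff_eq_0)
qed

lemma coeff_tau_lt: "coeff (tau_lt r p) n = (if real n < r then coeff p n else 0)"
  unfolding tau_lt_def by (rule coeff_sum_monom_coeff_filter)

lemma coeff_tau_le: "coeff (tau_le r p) n = (if real n \<le> r then coeff p n else 0)"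
  unfolding tau_le_def by (rule coeff_sum_monom_coeff_filter)

lemma tau_lt_half: "tau_lt (real d / 2) p = (\<Sum>i<(d + 1) div 2. monom (coeff p i) i)"
proof (rule poly_eqI)
  fix n
  have "real n < real d / 2 \<longleftrightarrow> n < (d + 1) div 2" by linarith
  then show "coeff (tau_lt (real d / 2) p) n = coeff (\<Sum>i<(d + 1) div 2. monom (coeff p i) i) n"
    by (simp add: coeff_tau_lt coeff_sum coeff_monom)
qed

lemma sum_coeff_one_minus_X_mult:
  fixes p :: "'a::comm_ring_1 poly"
  shows "(\<Sum>i\<le>j. coeff ([:1, -1:] * p) i) = coeff p j"
  by (induction j) (simp_all add: mult_pCons_left)

lemma one_minus_mult_sum_power:
  fixes x :: "'a::comm_ring_1"
  assumes "a \<le> b"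
  shows "(1 - x) * (\<Sum>k=a..<b. x ^ k) = x ^ a - x ^ b"
proof -
  have "(1 - x) * (\<Sum>k=a..<b. x ^ k) = - (\<Sum>k=a..<b. x ^ Suc k - x ^ k)"
    by (simp add: sum_distrib_left sum_negf[symmetric] algebra_simps)
  also have "\<dots> = x ^ a - x ^ b"
    using sum_Suc_diff'[OF assms, of "power x"] by simp
  finally show ?thesis .
qed

lemma sum_power_inverse_reflect:
  fixes x :: "'a::field"
  assumes "a + b = Suc n" and "x \<noteq> 0"
  shows "x ^ n * (\<Sum>k=a..<b. (1 / x) ^ k) = (\<Sum>k=a..<b. x ^ k)"
proof -
  have "x ^ n * (1 / x) ^ k = x ^ (n - k)" if "k \<le> n" for k
    using that assms(2) by (simp add: power_diff power_one_over)
  then have "x ^ n * (\<Sum>k=a..<b. (1 / x) ^ k) = (\<Sum>k=a..<b. x ^ (n - k))"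
    using assms(1) by (auto simp: sum_distrib_left intro: sum.cong)
  also have "\<dots> = (\<Sum>k=a..<b. x ^ k)"
    using assms(1) by (intro sum.reindex_bij_witness[where i="\<lambda>k. n - k" and j="\<lambda>k. n - k"]) auto
  finally show ?thesis .
qed

definition lefschetz_poly :: "nat \<Rightarrow> real poly \<Rightarrow> real poly" where
  "lefschetz_poly d H =
     (\<Sum>i<(d + 1) div 2. \<Sum>k=i..<d - 1 - i. monom (coeff ([:1, -1:] * H) i) k)"

lemma poly_lefschetz_poly:
  "poly (lefschetz_poly d H) t =
     (\<Sum>i<(d + 1) div 2. coeff ([:1, -1:] * H) i * (\<Sum>k=i..<d - 1 - i. t ^ k))"
  by (simp add: lefschetz_poly_def poly_sum poly_monom sum_distrib_left)

lemma lefschetz_poly_times_one_minus: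
  fixes t :: real and d :: nat and H :: "real poly"
  assumes "t \<noteq> 0"
  defines "G \<equiv> tau_lt (real d / 2) ([:1, -1:] * H)"
  shows "(1 - t) * poly (lefschetz_poly d H) t = poly G t - t ^ (d - 1) * poly G (1 / t)"
proof -
  have "(1 - t) * (c * (\<Sum>k=i..<d - 1 - i. t ^ k)) = c * t ^ i - t ^ (d - 1) * (c * (1 / t) ^ i)"
    if "i < (d + 1) div 2" for c i
  proof -
    from that have geom: "(1 - t) * (\<Sum>k=i..<d - 1 - i. t ^ k) = t ^ i - t ^ (d - 1 - i)"
      by (intro one_minus_mult_sum_power) linarith
    from that have reflect: "t ^ (d - 1) * (1 / t) ^ i = t ^ (d - 1 - i)"
      using assms(1) by (simp add: power_diff power_one_over)
    have "(1 - t) * (c * (\<Sum>k=i..<d - 1 - i. t ^ k)) = c * (t ^ i - t ^ (d - 1 - i))"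
      by (simp only: mult.left_commute geom)
    also have "\<dots> = c * t ^ i - t ^ (d - 1) * (c * (1 / t) ^ i)"
      by (simp only: reflect mult.left_commute right_diff_distrib)
    finally show ?thesis .
  qed
  then show ?thesis
    by (simp add: poly_lefschetz_poly G_def tau_lt_half poly_sum poly_monom
        sum_distrib_left sum_subtractf[symmetric] del: mult_pCons_left)
qed

lemma lefschetz_poly_palindromic:
  fixes t :: real
  assumes "t \<noteq> 0"
  shows "poly (lefschetz_poly d H) t = t ^ (d - 2) * poly (lefschetz_poly d H) (1 / t)"
proof -
  have "(\<Sum>k=i..<d - 1 - i. t ^ k) = t ^ (d - 2) * (\<Sum>k=i..<d - 1 - i. (1 / t) ^ k)"
    if "i < (d + 1) div 2" for i
  proof (cases "i < d - 1 - i")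
    case True
    then have "i + (d - 1 - i) = Suc (d - 2)" by linarith
    then show ?thesis using sum_power_inverse_reflect assms by metis
  qed simp
  then show ?thesis
    by (simp add: poly_lefschetz_poly sum_distrib_left mult.left_commute)
qed

lemma coeff_lefschetz_poly_low:
  assumes "2 * j \<le> d - 2" and "d \<ge> 2"
  shows "coeff (lefschetz_poly d H) j = coeff H j"
proof -
  define g where "g = coeff ([:1, -1:] * H)"
  have "coeff (lefschetz_poly d H) j = (\<Sum>i<(d + 1) div 2. if i \<le> j \<and> j < d - 1 - i then g i else 0)"
    unfolding lefschetz_poly_def g_def[symmetric] by (simp add: coeff_sum coeff_monom)
  also have "\<dots> = (\<Sum>i<(d + 1) div 2. if i \<le> j then g i else 0)"
    using assms by (intro sum.cong) auto
  also have "\<dots> = (\<Sum>i\<le>j. g i)"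
    using assms by (simp add: sum.If_cases Int_def) (intro sum.cong; auto)
  also have "\<dots> = coeff H j"
    unfolding g_def by (rule sum_coeff_one_minus_X_mult)
  finally show ?thesis .
qed

lemma tau_le_lefschetz_poly:
  assumes "d \<ge> 2"
  shows "tau_le (real (d - 2) / 2) (lefschetz_poly d H) = tau_le (real (d - 2) / 2) H"
proof (rule poly_eqI)
  fix j
  have "real j \<le> real (d - 2) / 2 \<longleftrightarrow> 2 * j \<le> d - 2" by linarith
  then show "coeff (tau_le (real (d - 2) / 2) (lefschetz_poly d H)) j = coeff (tau_le (real (d - 2) / 2) H) j"
    using coeff_lefschetz_poly_low[OF _ assms] by (simp add: coeff_tau_le)
qed

lemma G_face_eq_tau_lt:
  assumes "aff_dim C = int d" and "d \<noteq> 0"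
  shows "G_face C = tau_lt (real d / 2) ([:1, -1:] * H_face C)"
  using assms by (simp add: G_face_def G_int_def H_face_def face_rank_def)

theorem proposition3p14:
  fixes C :: "(real^'n) set" and d :: nat
  assumes "rational_poly_cone C"
    and "C \<inter> uminus ` C = {0}"
    and "aff_dim C = int d"
    and "d \<ge> 2"
  shows "\<exists>Q :: real poly.
           (\<forall>t::real. t \<noteq> 0 \<and> t \<noteq> 1 \<longrightarrow>
              poly Q t = (poly (G_face C) t - t ^ (d - 1) * poly (G_face C) (1 / t)) / (1 - t))
         \<and> (\<forall>t::real. t \<noteq> 0 \<longrightarrow> poly Q t = t ^ (d - 2) * poly Q (1 / t))
         \<and> tau_le (real (d - 2) / 2) Q = tau_le (real (d - 2) / 2) (H_face C)"
proof -
  let ?Q = "lefschetz_poly d (H_face C)"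
  have G: "G_face C = tau_lt (real d / 2) ([:1, -1:] * H_face C)"
    using assms(4) by (intro G_face_eq_tau_lt[OF assms(3)]) simp
  have "poly ?Q t = (poly (G_face C) t - t ^ (d - 1) * poly (G_face C) (1 / t)) / (1 - t)"
    if "t \<noteq> 0" and "t \<noteq> 1" for t :: real
    using lefschetz_poly_times_one_minus[OF that(1), of d "H_face C"] that(2)
    unfolding G by (simp add: field_simps)
  moreover have "poly ?Q t = t ^ (d - 2) * poly ?Q (1 / t)" if "t \<noteq> 0" for t :: real
    using lefschetz_poly_palindromic[OF that] .
  moreover have "tau_le (real (d - 2) / 2) ?Q = tau_le (real (d - 2) / 2) (H_face C)"
    using tau_le_lefschetz_poly[OF assms(4)] .
  ultimately show ?thesis by blast
qed

end
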